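(* Let $A\in\mathbb{R}^{n\times n}$, $F\in\mathbb{R}^{m\times m}$ and $g\in\mathbb{R}^{m\times 1}$ be arbitrary. Set $G=g\otimes I_n$ and $H=I_m\otimes A+F\otimes I_n$. Then there exists a nonsingular $mn\times mn$ matrix $T$ such that $$\begin{bmatrix}G & HG & \cdots & H^{m-1}G\end{bmatrix}=\begin{bmatrix}g\otimes I_n & (Fg)\otimes I_n & \cdots & (F^{m-1}g)\otimes I_n\end{bmatrix}T.$$
   Context: $\otimes$ denotes the Kronecker product. *)

theory Defs
  imports "Jordan_Normal_Form.Matrix"
begin

definition kron :: "'a :: times mat \<Rightarrow> 'a mat \<Rightarrow> 'a mat" where
  "kron A B = mat (dim_row A * dim_row B) (dim_col A * dim_col B)
     (\<lambda>(i,j). A $$ (i div dim_row B, j div dim_col B) * B $$ (i mod dim_row B, j mod dim_col B))"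

definition block_row :: "nat \<Rightarrow> nat \<Rightarrow> nat \<Rightarrow> (nat \<Rightarrow> 'a mat) \<Rightarrow> 'a mat" where
  "block_row k r c B = mat r (k * c) (\<lambda>(i,j). B (j div c) $$ (i, j mod c))"

end

theory Submission
  imports Defs "Jordan_Normal_Form.Determinant"
begin

text \<open>
  The two summands of \<open>H = I \<otimes> A + F \<otimes> I\<close> commute, so the binomial theorem and the
  mixed-product rule give \<open>H^k (g \<otimes> I) = \<Sum>j\<le>k. C(k,j) (F^j g) \<otimes> A^(k-j)
  = \<Sum>j. ((F^j g) \<otimes> I) C(k,j) A^(k-j)\<close>. Hence \<open>T\<close> can be taken to be the block matrix
  with block \<open>C(k,j) A^(k-j)\<close> in position \<open>(j,k)\<close>: it is block upper triangular with
  identity blocks on the diagonal, so \<open>det T = 1\<close>.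
\<close>

lemma sum_choose_Suc:
  fixes f :: "nat \<Rightarrow> nat \<Rightarrow> 'a :: comm_semiring_1"
  shows "(\<Sum>j\<le>Suc k. of_nat (Suc k choose j) * f j (Suc k - j))
       = (\<Sum>j\<le>k. of_nat (k choose j) * f j (Suc k - j))
       + (\<Sum>j\<le>k. of_nat (k choose j) * f (Suc j) (k - j))"
proof -
  have "(\<Sum>j\<le>Suc k. of_nat (Suc k choose j) * f j (Suc k - j))
      = f 0 (Suc k) + (\<Sum>j\<le>k. of_nat (k choose Suc j) * f (Suc j) (k - j))
      + (\<Sum>j\<le>k. of_nat (k choose j) * f (Suc j) (k - j))"
    by (subst sum.atMost_Suc_shift) (simp add: sum.distrib distrib_right add_ac del: sum.atMost_Suc)
  also have "f 0 (Suc k) + (\<Sum>j\<le>k. of_nat (k choose Suc j) * f (Suc j) (k - j))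
      = (\<Sum>j\<le>Suc k. of_nat (k choose j) * f j (Suc k - j))"
    by (subst sum.atMost_Suc_shift) simp
  also have "\<dots> = (\<Sum>j\<le>k. of_nat (k choose j) * f j (Suc k - j))"
    by (simp add: binomial_eq_0)
  finally show ?thesis .
qed

lemma block_index_less: "a < m \<Longrightarrow> x < n \<Longrightarrow> a * n + x < m * (n::nat)"
proof -
  assume "a < m" "x < n"
  then have "a * n + x < Suc a * n" by simp
  also have "\<dots> \<le> m * n" using \<open>a < m\<close> by (intro mult_le_mono1) simp
  finally show ?thesis .
qed

lemma block_index_cases:
  assumes "i < m * (n::nat)"
  obtains a x where "a < m" "x < n" "i = a * n + x"
proof
  have "n > 0" using assms by (cases n) auto
  then show "i div n < m" "i mod n < n" "i = i div n * n + i mod n"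
    using assms by (simp_all add: less_mult_imp_div_less)
qed

lemma sum_block_index: "(\<Sum>l<(m::nat) * n. f l) = (\<Sum>a<m. \<Sum>x<n. f (a * n + x))"
proof -
  have "(\<Sum>l<m * n. f l) = (\<Sum>a<m. \<Sum>l = a * n..<a * n + n. f l)"
    by (rule sum.nat_group[symmetric])
  then show ?thesis
    by (simp add: sum.atLeastLessThan_shift_0[of _ "_ * n"] lessThan_atLeast0 comp_def)
qed

lemma pow_mat_Suc_left: "X \<in> carrier_mat n n \<Longrightarrow> X ^\<^sub>m Suc k = X * X ^\<^sub>m k"
proof (induction k)
  case (Suc k)
  then have "X ^\<^sub>m Suc (Suc k) = (X * X ^\<^sub>m k) * X" by simp
  also have "\<dots> = X * (X ^\<^sub>m k * X)" using Suc.prems by (simp add: assoc_mult_mat[of _ n n _ n _ n])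
  finally show ?case by simp
qed simp

lemma index_mult_mat_sum:
  "X \<in> carrier_mat r s \<Longrightarrow> Y \<in> carrier_mat s t \<Longrightarrow> i < r \<Longrightarrow> j < t \<Longrightarrow>
   (X * Y) $$ (i, j) = (\<Sum>l<s. X $$ (i, l) * Y $$ (l, j))"
  by (auto simp: scalar_prod_def lessThan_atLeast0 intro!: sum.cong)

lemma dim_row_kron: "dim_row (kron X Y) = dim_row X * dim_row Y"
  unfolding kron_def by (rule dim_row_mat)

lemma dim_col_kron: "dim_col (kron X Y) = dim_col X * dim_col Y"
  unfolding kron_def by (rule dim_col_mat)

lemma kron_carrier_mat:
  "X \<in> carrier_mat p q \<Longrightarrow> Y \<in> carrier_mat r s \<Longrightarrow> kron X Y \<in> carrier_mat (p * r) (q * s)"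
  by (intro carrier_matI) (auto simp: dim_row_kron dim_col_kron)

lemma index_kron_block:
  assumes "X \<in> carrier_mat p q" "Y \<in> carrier_mat r s" "a < p" "b < q" "x < r" "y < s"
  shows "kron X Y $$ (a * r + x, b * s + y) = X $$ (a, b) * Y $$ (x, y)"
  using assms by (simp add: kron_def block_index_less)

lemma index_mult_kron:
  fixes X Y Z :: "'a :: comm_semiring_1 mat"
  assumes X: "X \<in> carrier_mat p p'" and Y: "Y \<in> carrier_mat r s" and Z: "Z \<in> carrier_mat (p' * s) c"
    and "a < p" "x < r" "j < c"
  shows "(kron X Y * Z) $$ (a * r + x, j)
    = (\<Sum>a'<p'. \<Sum>b<s. X $$ (a, a') * Y $$ (x, b) * Z $$ (a' * s + b, j))"
proof -
  have "(kron X Y * Z) $$ (a * r + x, j) = (\<Sum>l<p' * s. kron X Y $$ (a * r + x, l) * Z $$ (l, j))"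
    using assms kron_carrier_mat[OF X Y]
    by (intro index_mult_mat_sum[of _ "p * r"]) (auto simp: block_index_less)
  then show ?thesis
    using assms by (simp add: sum_block_index index_kron_block)
qed

lemma index_mult_kron_one_left:
  fixes A Z :: "'a :: comm_semiring_1 mat"
  assumes "A \<in> carrier_mat n n" "Z \<in> carrier_mat (m * n) c" "a < m" "x < n" "j < c"
  shows "(kron (1\<^sub>m m) A * Z) $$ (a * n + x, j) = (\<Sum>b<n. A $$ (x, b) * Z $$ (a * n + b, j))"
proof -
  have "(kron (1\<^sub>m m) A * Z) $$ (a * n + x, j)
      = (\<Sum>a'<m. \<Sum>b<n. (if a = a' then 1 else 0) * A $$ (x, b) * Z $$ (a' * n + b, j))"
    using assms by (simp add: index_mult_kron[of _ m m _ n n] del: index_mult_mat(1))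
  also have "\<dots> = (\<Sum>a'<m. if a = a' then \<Sum>b<n. A $$ (x, b) * Z $$ (a' * n + b, j) else 0)"
    by (intro sum.cong) auto
  finally show ?thesis using assms by simp
qed

lemma index_mult_kron_one_right:
  fixes F Z :: "'a :: comm_semiring_1 mat"
  assumes "F \<in> carrier_mat m m" "Z \<in> carrier_mat (m * n) c" "a < m" "x < n" "j < c"
  shows "(kron F (1\<^sub>m n) * Z) $$ (a * n + x, j) = (\<Sum>a'<m. F $$ (a, a') * Z $$ (a' * n + x, j))"
proof -
  have "(kron F (1\<^sub>m n) * Z) $$ (a * n + x, j)
      = (\<Sum>a'<m. \<Sum>b<n. F $$ (a, a') * (if x = b then 1 else 0) * Z $$ (a' * n + b, j))"
    using assms by (simp add: index_mult_kron[of _ m m _ n n] del: index_mult_mat(1))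
  also have "\<dots> = (\<Sum>a'<m. \<Sum>b<n. if x = b then F $$ (a, a') * Z $$ (a' * n + b, j) else 0)"
    by (intro sum.cong) auto
  finally show ?thesis using assms by simp
qed

lemma index_kron_sum_mult:
  fixes A F Z :: "'a :: comm_semiring_1 mat"
  assumes A: "A \<in> carrier_mat n n" and F: "F \<in> carrier_mat m m" and Z: "Z \<in> carrier_mat (m * n) c"
    and "a < m" "x < n" "j < c"
  shows "((kron (1\<^sub>m m) A + kron F (1\<^sub>m n)) * Z) $$ (a * n + x, j)
    = (\<Sum>b<n. A $$ (x, b) * Z $$ (a * n + b, j)) + (\<Sum>a'<m. F $$ (a, a') * Z $$ (a' * n + x, j))"
proof -
  have "(kron (1\<^sub>m m) A + kron F (1\<^sub>m n)) * Z = kron (1\<^sub>m m) A * Z + kron F (1\<^sub>m n) * Z"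
    using kron_carrier_mat[OF one_carrier_mat A] kron_carrier_mat[OF F one_carrier_mat] Z
    by (rule add_mult_distrib_mat)
  then have "((kron (1\<^sub>m m) A + kron F (1\<^sub>m n)) * Z) $$ (a * n + x, j)
      = (kron (1\<^sub>m m) A * Z) $$ (a * n + x, j) + (kron F (1\<^sub>m n) * Z) $$ (a * n + x, j)"
    using assms by (simp only:) (intro index_add_mat(1),
      simp_all add: carrier_matD[OF kron_carrier_mat[OF F one_carrier_mat]] block_index_less)
  also have "\<dots> = (\<Sum>b<n. A $$ (x, b) * Z $$ (a * n + b, j))
      + (\<Sum>a'<m. F $$ (a, a') * Z $$ (a' * n + x, j))"
    using assms by (simp only: index_mult_kron_one_left[OF A Z] index_mult_kron_one_right[OF F Z])
  finally show ?thesis .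
qed

lemma sum_index_mult_pow_mat_Suc:
  fixes A :: "'a :: comm_semiring_1 mat"
  assumes A: "A \<in> carrier_mat n n" and "x < n" "j < n"
  shows "(\<Sum>b<n. A $$ (x, b) * (\<Sum>i\<le>k. c i * d i * (A ^\<^sub>m (k - i)) $$ (b, j)))
    = (\<Sum>i\<le>k. c i * d i * (A ^\<^sub>m (Suc k - i)) $$ (x, j))"
proof -
  have "(\<Sum>b<n. A $$ (x, b) * (\<Sum>i\<le>k. c i * d i * (A ^\<^sub>m (k - i)) $$ (b, j)))
      = (\<Sum>i\<le>k. c i * d i * (\<Sum>b<n. A $$ (x, b) * (A ^\<^sub>m (k - i)) $$ (b, j)))"
    by (simp add: sum_distrib_left sum.swap[of _ "{..k}"] mult_ac)
  also have "\<dots> = (\<Sum>i\<le>k. c i * d i * (A ^\<^sub>m (Suc k - i)) $$ (x, j))"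
  proof (intro sum.cong refl arg_cong[where f = "\<lambda>t. c _ * d _ * t"])
    fix i assume "i \<in> {..k}"
    then have "A ^\<^sub>m (Suc k - i) = A * A ^\<^sub>m (k - i)"
      by (simp only: atMost_iff Suc_diff_le pow_mat_Suc_left[OF A])
    then show "(\<Sum>b<n. A $$ (x, b) * (A ^\<^sub>m (k - i)) $$ (b, j)) = (A ^\<^sub>m (Suc k - i)) $$ (x, j)"
      using A assms by (simp only: index_mult_mat_sum[OF A pow_carrier_mat[OF A]])
  qed
  finally show ?thesis .
qed

lemma sum_index_mult_pow_mat_vec_Suc:
  fixes F g :: "'a :: comm_semiring_1 mat"
  assumes F: "F \<in> carrier_mat m m" and g: "g \<in> carrier_mat m 1" and "a < m"
  shows "(\<Sum>a'<m. F $$ (a, a') * (\<Sum>i\<le>k. c i * (F ^\<^sub>m i * g) $$ (a', 0) * d i))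
    = (\<Sum>i\<le>k. c i * (F ^\<^sub>m Suc i * g) $$ (a, 0) * d i)"
proof -
  have "(\<Sum>a'<m. F $$ (a, a') * (\<Sum>i\<le>k. c i * (F ^\<^sub>m i * g) $$ (a', 0) * d i))
      = (\<Sum>i\<le>k. c i * (\<Sum>a'<m. F $$ (a, a') * (F ^\<^sub>m i * g) $$ (a', 0)) * d i)"
    by (simp add: sum_distrib_left sum_distrib_right sum.swap[of _ "{..k}"] mult_ac)
  also have "\<dots> = (\<Sum>i\<le>k. c i * (F ^\<^sub>m Suc i * g) $$ (a, 0) * d i)"
  proof (intro sum.cong refl arg_cong[where f = "\<lambda>t. c _ * t * d _"])
    fix i
    have "F ^\<^sub>m Suc i * g = F * (F ^\<^sub>m i * g)"
      unfolding pow_mat_Suc_left[OF F] using F g by (intro assoc_mult_mat) auto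
    then show "(\<Sum>a'<m. F $$ (a, a') * (F ^\<^sub>m i * g) $$ (a', 0)) = (F ^\<^sub>m Suc i * g) $$ (a, 0)"
      using assms by (simp only: index_mult_mat_sum[OF F mult_carrier_mat[OF pow_carrier_mat[OF F] g]])
  qed
  finally show ?thesis .
qed

lemma index_kron_sum_pow_mult:
  fixes A F g :: "'a :: comm_semiring_1 mat"
  assumes A: "A \<in> carrier_mat n n" and F: "F \<in> carrier_mat m m" and g: "g \<in> carrier_mat m 1"
    and "a < m" "x < n" "j < n"
  shows "((kron (1\<^sub>m m) A + kron F (1\<^sub>m n)) ^\<^sub>m k * kron g (1\<^sub>m n)) $$ (a * n + x, j)
    = (\<Sum>i\<le>k. of_nat (k choose i) * (F ^\<^sub>m i * g) $$ (a, 0) * (A ^\<^sub>m (k - i)) $$ (x, j))"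
  using assms(4-6)
proof (induction k arbitrary: a x j)
  let ?H = "kron (1\<^sub>m m) A + kron F (1\<^sub>m n)" and ?G = "kron g (1\<^sub>m n)"
  let ?v = "\<lambda>i a. (F ^\<^sub>m i * g) $$ (a, 0)"
  have H: "?H \<in> carrier_mat (m * n) (m * n)"
    by (intro add_carrier_mat kron_carrier_mat one_carrier_mat A F)
  have G: "?G \<in> carrier_mat (m * n) n"
    using kron_carrier_mat[OF g one_carrier_mat] by simp
  {
    case 0
    have "?H ^\<^sub>m 0 * ?G = ?G"
      unfolding pow_mat.simps(1) carrier_matD(1)[OF H] by (rule left_mult_one_mat[OF G])
    then have "(?H ^\<^sub>m 0 * ?G) $$ (a * n + x, j) = ?G $$ (a * n + x, 0 * n + j)"
      by simp
    also have "\<dots> = g $$ (a, 0) * 1\<^sub>m n $$ (x, j)"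
      using g 0 by (intro index_kron_block) auto
    also have "\<dots> = (\<Sum>i\<le>0. of_nat (0 choose i) * ?v i a * (A ^\<^sub>m (0 - i)) $$ (x, j))"
      using A F g by (simp add: left_mult_one_mat)
    finally show ?case .
  next
    case (Suc k)
    let ?Z = "?H ^\<^sub>m k * ?G"
    have "?H ^\<^sub>m Suc k * ?G = ?H * ?Z"
      unfolding pow_mat_Suc_left[OF H] using H G by (intro assoc_mult_mat) auto
    then have "(?H ^\<^sub>m Suc k * ?G) $$ (a * n + x, j)
        = (\<Sum>b<n. A $$ (x, b) * ?Z $$ (a * n + b, j)) + (\<Sum>a'<m. F $$ (a, a') * ?Z $$ (a' * n + x, j))"
      using index_kron_sum_mult[OF A F mult_carrier_mat[OF pow_carrier_mat[OF H] G] Suc.prems]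
      by (simp only:)
    also have "\<dots> = (\<Sum>i\<le>k. of_nat (k choose i) * ?v i a * (A ^\<^sub>m (Suc k - i)) $$ (x, j))
        + (\<Sum>i\<le>k. of_nat (k choose i) * ?v (Suc i) a * (A ^\<^sub>m (k - i)) $$ (x, j))"
      using A F g Suc
      by (simp add: sum_index_mult_pow_mat_Suc sum_index_mult_pow_mat_vec_Suc del: index_mult_mat(1))
    also have "\<dots> = (\<Sum>i\<le>Suc k. of_nat (Suc k choose i) * ?v i a * (A ^\<^sub>m (Suc k - i)) $$ (x, j))"
      using sum_choose_Suc[of k "\<lambda>i l. ?v i a * (A ^\<^sub>m l) $$ (x, j)"] by (simp only: mult.assoc)
    finally show ?case .
  }
qed

lemma index_kron_column_mult:
  fixes v M :: "'a :: comm_semiring_1 mat"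
  assumes v: "v \<in> carrier_mat m 1" and M: "M \<in> carrier_mat n c" and "a < m" "x < n" "y < c"
  shows "(kron v (1\<^sub>m n) * M) $$ (a * n + x, y) = v $$ (a, 0) * M $$ (x, y)"
proof -
  have "(kron v (1\<^sub>m n) * M) $$ (a * n + x, y)
      = (\<Sum>b<n. v $$ (a, 0) * (if x = b then 1 else 0) * M $$ (b, y))"
    using assms by (simp add: index_mult_kron[of _ m 1 _ n n])
  also have "\<dots> = (\<Sum>b<n. if x = b then v $$ (a, 0) * M $$ (b, y) else 0)"
    by (intro sum.cong) auto
  finally show ?thesis using assms by simp
qed

definition block_mat :: "nat \<Rightarrow> nat \<Rightarrow> (nat \<Rightarrow> nat \<Rightarrow> 'a mat) \<Rightarrow> 'a mat" where
  "block_mat k c B = mat (k * c) (k * c) (\<lambda>(i, j). B (i div c) (j div c) $$ (i mod c, j mod c))"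

lemma block_mat_carrier_mat: "block_mat k c B \<in> carrier_mat (k * c) (k * c)"
  by (simp add: block_mat_def)

lemma index_block_mat:
  "p < k \<Longrightarrow> q < k \<Longrightarrow> x < c \<Longrightarrow> y < c \<Longrightarrow>
   block_mat k c B $$ (p * c + x, q * c + y) = B p q $$ (x, y)"
  by (simp add: block_mat_def block_index_less)

lemma block_row_carrier_mat: "block_row k r c K \<in> carrier_mat r (k * c)"
  by (simp add: block_row_def)

lemma index_block_row:
  "i < r \<Longrightarrow> q < k \<Longrightarrow> y < c \<Longrightarrow> block_row k r c K $$ (i, q * c + y) = K q $$ (i, y)"
  by (simp add: block_row_def block_index_less)

lemma index_block_row_mult_block_mat:
  fixes K :: "nat \<Rightarrow> 'a :: comm_semiring_1 mat"
  assumes "\<And>p. p < k \<Longrightarrow> K p \<in> carrier_mat r c"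
    and "\<And>p. p < k \<Longrightarrow> B p q \<in> carrier_mat c c"
    and "i < r" "q < k" "y < c"
  shows "(block_row k r c K * block_mat k c B) $$ (i, q * c + y) = (\<Sum>p<k. (K p * B p q) $$ (i, y))"
proof -
  have "(block_row k r c K * block_mat k c B) $$ (i, q * c + y)
      = (\<Sum>l<k * c. block_row k r c K $$ (i, l) * block_mat k c B $$ (l, q * c + y))"
    using assms by (intro index_mult_mat_sum[OF block_row_carrier_mat block_mat_carrier_mat] block_index_less)
  also have "\<dots> = (\<Sum>p<k. \<Sum>x<c. K p $$ (i, x) * B p q $$ (x, y))"
    using assms by (simp add: sum_block_index index_block_row index_block_mat)
  also have "\<dots> = (\<Sum>p<k. (K p * B p q) $$ (i, y))"
    using assms by (intro sum.cong refl) (simp add: index_mult_mat_sum[of _ r c _ c])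
  finally show ?thesis .
qed

lemma invertible_upper_unitriangular:
  fixes T :: "'a :: field mat"
  assumes T: "T \<in> carrier_mat n n" and "upper_triangular T" and "\<And>i. i < n \<Longrightarrow> T $$ (i, i) = 1"
  shows "invertible_mat T"
proof -
  have "det T = 1"
    using assms by (simp add: det_upper_triangular[of _ n] prod_list_diag_prod)
  then obtain S where "S \<in> carrier_mat n n" "S * T = 1\<^sub>m n" "T * S = 1\<^sub>m n"
    using det_non_zero_imp_unit[OF T, of "()"] unfolding Units_def ring_mat_def by auto
  with T show ?thesis
    unfolding invertible_mat_def inverts_mat_def by auto
qed

lemma invertible_block_mat_upper_unitriangular:
  fixes B :: "nat \<Rightarrow> nat \<Rightarrow> 'a :: field mat"
  assumes diag: "\<And>p. p < k \<Longrightarrow> B p p = 1\<^sub>m c"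
    and lower: "\<And>p q x y. q < p \<Longrightarrow> p < k \<Longrightarrow> x < c \<Longrightarrow> y < c \<Longrightarrow> B p q $$ (x, y) = 0"
  shows "invertible_mat (block_mat k c B)"
proof (rule invertible_upper_unitriangular[OF block_mat_carrier_mat])
  show "upper_triangular (block_mat k c B)"
  proof (rule upper_triangularI)
    fix i j assume "j < i" "i < dim_row (block_mat k c B)"
    then have i: "i < k * c" and "0 < c" by (auto simp: block_mat_def intro: gr0I)
    then have ij: "i div c < k" "i mod c < c" "j mod c < c"
      by (simp_all add: less_mult_imp_div_less)
    have entry: "block_mat k c B $$ (i, j) = B (i div c) (j div c) $$ (i mod c, j mod c)"
      using i \<open>j < i\<close> by (simp add: block_mat_def)
    have "j div c \<le> i div c"
      using \<open>j < i\<close> by (simp add: div_le_mono)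
    then consider "j div c < i div c" | "j div c = i div c" "j mod c < i mod c"
      using \<open>j < i\<close> by (metis div_mult_mod_eq le_neq_implies_less nat_add_left_cancel_less)
    then show "block_mat k c B $$ (i, j) = 0"
    proof cases
      case 1
      then show ?thesis using entry ij lower by simp
    next
      case 2
      then show ?thesis using entry ij diag by simp
    qed
  qed
  show "block_mat k c B $$ (i, i) = 1" if "i < k * c" for i
    using that diag by (auto simp: index_block_mat elim: block_index_cases)
qed

text \<open>For \<open>p > q\<close> the binomial coefficient vanishes, so the truncated exponent \<open>q - p\<close>
  does no harm.\<close>

definition binomial_block_mat :: "nat \<Rightarrow> 'a :: semiring_1 mat \<Rightarrow> 'a mat" where
  "binomial_block_mat m A = block_mat m (dim_row A) (\<lambda>p q. of_nat (q choose p) \<cdot>\<^sub>m A ^\<^sub>m (q - p))"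

lemma binomial_block_mat_carrier_mat:
  "A \<in> carrier_mat n n \<Longrightarrow> binomial_block_mat m A \<in> carrier_mat (m * n) (m * n)"
  unfolding binomial_block_mat_def using block_mat_carrier_mat by auto

lemma invertible_binomial_block_mat:
  fixes A :: "'a :: field mat"
  assumes "A \<in> carrier_mat n n"
  shows "invertible_mat (binomial_block_mat m A)"
  unfolding binomial_block_mat_def
  using assms by (intro invertible_block_mat_upper_unitriangular) (auto simp: binomial_eq_0)

lemma block_row_kron_sum_pow_factorization:
  fixes A F g :: "'a :: comm_semiring_1 mat"
  assumes A: "A \<in> carrier_mat n n" and F: "F \<in> carrier_mat m m" and g: "g \<in> carrier_mat m 1"
  shows "block_row m (m * n) n (\<lambda>k. (kron (1\<^sub>m m) A + kron F (1\<^sub>m n)) ^\<^sub>m k * kron g (1\<^sub>m n))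
    = block_row m (m * n) n (\<lambda>k. kron (F ^\<^sub>m k * g) (1\<^sub>m n)) * binomial_block_mat m A"
    (is "?L = ?K * ?T")
proof (rule eq_matI)
  have T: "?T \<in> carrier_mat (m * n) (m * n)"
    using A by (rule binomial_block_mat_carrier_mat)
  show "dim_row ?L = dim_row (?K * ?T)" "dim_col ?L = dim_col (?K * ?T)"
    using T by (simp_all add: block_row_def)
  fix i j assume "i < dim_row (?K * ?T)" "j < dim_col (?K * ?T)"
  then have "i < m * n" "j < m * n"
    using T by (simp_all add: block_row_def)
  obtain a x where ax: "a < m" "x < n" "i = a * n + x"
    using \<open>i < m * n\<close> by (rule block_index_cases)
  obtain q y where qy: "q < m" "y < n" "j = q * n + y"
    using \<open>j < m * n\<close> by (rule block_index_cases)
  let ?E = "\<lambda>p. kron (F ^\<^sub>m p * g) (1\<^sub>m n)" and ?B = "\<lambda>p. of_nat (q choose p) \<cdot>\<^sub>m A ^\<^sub>m (q - p)"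
  have E: "?E p \<in> carrier_mat (m * n) n" for p
    using kron_carrier_mat[OF mult_carrier_mat[OF pow_carrier_mat[OF F] g] one_carrier_mat] by simp
  have B: "?B p \<in> carrier_mat n n" for p
    using A by simp
  let ?c = "\<lambda>p. of_nat (q choose p) * (F ^\<^sub>m p * g) $$ (a, 0) * (A ^\<^sub>m (q - p)) $$ (x, y)"
  have "?L $$ (i, j) = (\<Sum>p\<le>q. ?c p)"
    using A F g ax qy by (simp add: index_block_row block_index_less index_kron_sum_pow_mult)
  also have "\<dots> = (\<Sum>p<m. ?c p)"
    using qy by (intro sum.mono_neutral_left) (auto simp: binomial_eq_0)
  also have "\<dots> = (\<Sum>p<m. (?E p * ?B p) $$ (i, y))"
  proof (intro sum.cong refl)
    fix p
    have "(?E p * ?B p) $$ (a * n + x, y) = (F ^\<^sub>m p * g) $$ (a, 0) * ?B p $$ (x, y)"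
      by (rule index_kron_column_mult[OF mult_carrier_mat[OF pow_carrier_mat[OF F] g] B ax(1,2) qy(2)])
    then show "?c p = (?E p * ?B p) $$ (i, y)"
      using A ax qy by (simp add: mult_ac del: index_mult_mat(1))
  qed
  also have "\<dots> = (?K * ?T) $$ (i, j)"
    unfolding binomial_block_mat_def carrier_matD(1)[OF A] qy(3)
    by (rule index_block_row_mult_block_mat[symmetric])
      (use E B ax qy in \<open>simp_all add: block_index_less\<close>)
  finally show "?L $$ (i, j) = (?K * ?T) $$ (i, j)" .
qed

theorem lemma3:
  fixes A F g :: "real mat" and m n :: nat
  assumes "A \<in> carrier_mat n n" and "F \<in> carrier_mat m m" and "g \<in> carrier_mat m 1"
  shows "\<exists>T \<in> carrier_mat (m * n) (m * n). invertible_mat T \<and>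
    block_row m (m * n) n
      (\<lambda>k. (kron (1\<^sub>m m) A + kron F (1\<^sub>m n)) ^\<^sub>m k * kron g (1\<^sub>m n))
    = block_row m (m * n) n (\<lambda>k. kron (F ^\<^sub>m k * g) (1\<^sub>m n)) * T"
  using binomial_block_mat_carrier_mat[OF assms(1)] invertible_binomial_block_mat[OF assms(1)]
    block_row_kron_sum_pow_factorization[OF assms]
  by blast

end
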